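(* Let $f,g\in c_{0,0}(\mathbb{Z})$ and $\alpha>0$. Then $$W^\alpha(f*g)(n)=(W_+^\alpha f_+*g_-)(n)+W_+^\alpha(f_+*g_+)(n)+(f_-*W_+^\alpha g_+)(n),\qquad n\ge0,$$ $$W^\alpha(f*g)(n)=(W_-^\alpha f_-*g_+)(n)+W_-^\alpha(f_-*g_-)(n)+(f_+*W_-^\alpha g_-)(n),\qquad n<0.$$
   Context: $c_{0,0}(\mathbb{Z})$ is the space of finitely supported complex sequences on $\mathbb{Z}$, with convolution $(f*g)(n)=\sum_{j\in\mathbb{Z}}f(n-j)g(j)$. $f_+(n)=f(n)$ for $n\ge0$, $0$ for $n<0$; $f_-(n)=0$ for $n\ge0$, $f(n)$ for $n<0$. For $\gamma\in\mathbb{R}$, $k^\gamma(0)=1$, $k^\gamma(n)=\frac{\gamma(\gamma+1)\cdots(\gamma+n-1)}{n!}$ for $n\ge1$. $W_+f(n)=f(n)-f(n+1)$, $W_-f(n)=f(n)-f(n-1)$, $W_\pm^m$ their powers. For $\alpha>0$: $W_+^{-\alpha}f(n)=\sum_{j\ge n}k^\alpha(j-n)f(j)$, $W_-^{-\alpha}f(n)=\sum_{j\le n}k^\alpha(n-j)f(j)$, $W_\pm^\alpha f=W_\pm^mW_\pm^{-(m-\alpha)}f$ with $m=[\alpha]+1$. Finally $W^\alpha f(n)=W_+^\alpha f(n)$ for $n\ge0$ and $W^\alpha f(n)=W_-^\alpha f(n)$ for $n<0$. *)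

theory Defs
  imports "HOL-Analysis.Analysis"
begin

definition fin_supp :: "(int \<Rightarrow> complex) \<Rightarrow> bool" where
  "fin_supp f \<longleftrightarrow> finite {n. f n \<noteq> 0}"

definition conv :: "(int \<Rightarrow> complex) \<Rightarrow> (int \<Rightarrow> complex) \<Rightarrow> int \<Rightarrow> complex" (infixl "\<star>" 70) where
  "conv f g n = infsum (\<lambda>j. f (n - j) * g j) UNIV"

definition pos_part :: "(int \<Rightarrow> complex) \<Rightarrow> int \<Rightarrow> complex" where
  "pos_part f n = (if n \<ge> 0 then f n else 0)"

definition neg_part :: "(int \<Rightarrow> complex) \<Rightarrow> int \<Rightarrow> complex" where
  "neg_part f n = (if n \<ge> 0 then 0 else f n)"

definition kk :: "real \<Rightarrow> nat \<Rightarrow> real" where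
  "kk \<gamma> n = pochhammer \<gamma> n / fact n"

definition W_plus :: "(int \<Rightarrow> complex) \<Rightarrow> int \<Rightarrow> complex" where
  "W_plus f n = f n - f (n + 1)"

definition W_minus :: "(int \<Rightarrow> complex) \<Rightarrow> int \<Rightarrow> complex" where
  "W_minus f n = f n - f (n - 1)"

definition W_plus_neg :: "real \<Rightarrow> (int \<Rightarrow> complex) \<Rightarrow> int \<Rightarrow> complex" where
  "W_plus_neg \<alpha> f n = infsum (\<lambda>j. complex_of_real (kk \<alpha> (nat (j - n))) * f j) {n..}"

definition W_minus_neg :: "real \<Rightarrow> (int \<Rightarrow> complex) \<Rightarrow> int \<Rightarrow> complex" where
  "W_minus_neg \<alpha> f n = infsum (\<lambda>j. complex_of_real (kk \<alpha> (nat (n - j))) * f j) {..n}"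

definition W_plus_frac :: "real \<Rightarrow> (int \<Rightarrow> complex) \<Rightarrow> int \<Rightarrow> complex" where
  "W_plus_frac \<alpha> f = (W_plus ^^ (nat \<lfloor>\<alpha>\<rfloor> + 1)) (W_plus_neg (real (nat \<lfloor>\<alpha>\<rfloor> + 1) - \<alpha>) f)"

definition W_minus_frac :: "real \<Rightarrow> (int \<Rightarrow> complex) \<Rightarrow> int \<Rightarrow> complex" where
  "W_minus_frac \<alpha> f = (W_minus ^^ (nat \<lfloor>\<alpha>\<rfloor> + 1)) (W_minus_neg (real (nat \<lfloor>\<alpha>\<rfloor> + 1) - \<alpha>) f)"

definition W_frac :: "real \<Rightarrow> (int \<Rightarrow> complex) \<Rightarrow> int \<Rightarrow> complex" where
  "W_frac \<alpha> f n = (if n \<ge> 0 then W_plus_frac \<alpha> f n else W_minus_frac \<alpha> f n)"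

end

theory Submission
  imports Defs
begin

text \<open>
  Both fractional differences are linear and commute with translations, so they commute with
  convolution by a finitely supported sequence, which is a finite combination of translates.
  Moreover \<open>W\<^sub>+\<^sup>\<alpha> H n\<close> only depends on \<open>H\<close> on \<open>[n, \<infinity>)\<close>. Writing
  \<open>f * g = f\<^sub>+ * g\<^sub>+ + f\<^sub>+ * g\<^sub>- + f\<^sub>- * g\<^sub>+ + f\<^sub>- * g\<^sub>-\<close>, the last term vanishes on \<open>n \<ge> -1\<close>
  and so does its image under \<open>W\<^sub>+\<^sup>\<alpha>\<close>, while in the two mixed terms \<open>W\<^sub>+\<^sup>\<alpha>\<close> is moved onto
  the factor carrying the plus part. For \<open>n < 0\<close> the argument is mirrored: conjugation by the
  reflection \<open>n \<mapsto> -n\<close> turns \<open>W\<^sub>+\<close>, \<open>W\<^sub>+\<^sup>-\<^sup>\<beta>\<close> and \<open>W\<^sub>+\<^sup>\<alpha>\<close> into their backward counterparts.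
\<close>

lemma fin_supp_summable_on:
  assumes "fin_supp h"
  shows "h summable_on A"
proof -
  have "h summable_on (A \<inter> {x. h x \<noteq> 0})"
    using assms unfolding fin_supp_def by simp
  moreover have "h summable_on A \<longleftrightarrow> h summable_on (A \<inter> {x. h x \<noteq> 0})"
    by (rule summable_on_cong_neutral) auto
  ultimately show ?thesis by simp
qed

lemma fin_supp_add: "fin_supp a \<Longrightarrow> fin_supp b \<Longrightarrow> fin_supp (\<lambda>n. a n + b n)"
  unfolding fin_supp_def by (rule finite_subset[of _ "{n. a n \<noteq> 0} \<union> {n. b n \<noteq> 0}"]) auto

lemma fin_supp_mult_left: "fin_supp a \<Longrightarrow> fin_supp (\<lambda>n. c n * a n)"
  unfolding fin_supp_def by (erule finite_subset[rotated]) auto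

lemma fin_supp_shift:
  assumes "fin_supp a"
  shows "fin_supp (\<lambda>n. a (n - j))"
proof -
  have "{n. a (n - j) \<noteq> 0} = (\<lambda>k. k + j) ` {k. a k \<noteq> 0}"
    by (auto intro: image_eqI[of _ _ "_ - j"])
  with assms show ?thesis
    unfolding fin_supp_def by simp
qed

lemma fin_supp_pos_part: "fin_supp f \<Longrightarrow> fin_supp (pos_part f)"
  unfolding fin_supp_def pos_part_def by (erule finite_subset[rotated]) auto

lemma fin_supp_neg_part: "fin_supp f \<Longrightarrow> fin_supp (neg_part f)"
  unfolding fin_supp_def neg_part_def by (erule finite_subset[rotated]) auto

lemma pos_part_add_neg_part: "(\<lambda>n. pos_part f n + neg_part f n) = f"
  by (simp add: pos_part_def neg_part_def fun_eq_iff)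

lemma has_sum_sum:
  fixes f :: "'i \<Rightarrow> 'a \<Rightarrow> 'b::topological_comm_monoid_add"
  assumes "finite I" "\<And>i. i \<in> I \<Longrightarrow> (f i has_sum s i) A"
  shows "((\<lambda>x. \<Sum>i\<in>I. f i x) has_sum (\<Sum>i\<in>I. s i)) A"
  using assms by (induction I rule: finite_induct) (simp_all add: has_sum_add)

lemma infsum_sum:
  fixes f :: "'i \<Rightarrow> 'a \<Rightarrow> 'b::{topological_comm_monoid_add, t2_space}"
  assumes "finite I" "\<And>i. i \<in> I \<Longrightarrow> f i summable_on A"
  shows "infsum (\<lambda>x. \<Sum>i\<in>I. f i x) A = (\<Sum>i\<in>I. infsum (f i) A)"
  by (rule infsumI, rule has_sum_sum) (use assms in auto)

lemma conv_eq_sum: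
  assumes "finite S" "\<And>j. j \<notin> S \<Longrightarrow> g j = 0"
  shows "(F \<star> g) n = (\<Sum>j\<in>S. F (n - j) * g j)"
proof -
  have "(F \<star> g) n = infsum (\<lambda>j. F (n - j) * g j) S"
    unfolding conv_def by (rule infsum_cong_neutral) (use assms(2) in auto)
  then show ?thesis using assms(1) by simp
qed

lemma conv_eq_sum_supp:
  "fin_supp g \<Longrightarrow> (F \<star> g) n = (\<Sum>j | g j \<noteq> 0. F (n - j) * g j)"
  unfolding fin_supp_def by (rule conv_eq_sum) auto

lemma conv_commute: "F \<star> G = G \<star> F"
proof
  fix n :: int
  have "bij_betw (\<lambda>k. n - k) UNIV UNIV"
    by (rule bij_betw_byWitness[where f'="\<lambda>k. n - k"]) auto
  from infsum_reindex_bij_betw[OF this, of "\<lambda>j. F (n - j) * G j"]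
  show "(F \<star> G) n = (G \<star> F) n"
    unfolding conv_def by (simp add: mult.commute)
qed

lemma fin_supp_conv:
  assumes "fin_supp F" "fin_supp G"
  shows "fin_supp (F \<star> G)"
proof -
  let ?T = "{i. F i \<noteq> 0}" and ?S = "{j. G j \<noteq> 0}"
  have "{n. (F \<star> G) n \<noteq> 0} \<subseteq> (\<lambda>(i, j). i + j) ` (?T \<times> ?S)"
  proof
    fix n assume "n \<in> {n. (F \<star> G) n \<noteq> 0}"
    then obtain j where "j \<in> ?S" "F (n - j) \<noteq> 0"
      using conv_eq_sum_supp[OF assms(2)] sum.neutral by force
    then show "n \<in> (\<lambda>(i, j). i + j) ` (?T \<times> ?S)"
      by (intro image_eqI[of _ _ "(n - j, j)"]) auto
  qed
  moreover have "finite ((\<lambda>(i, j). i + j) ` (?T \<times> ?S))"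
    using assms unfolding fin_supp_def by simp
  ultimately show ?thesis unfolding fin_supp_def by (rule finite_subset)
qed

lemma conv_add_left:
  "fin_supp G \<Longrightarrow> (\<lambda>i. A i + B i) \<star> G = (\<lambda>n. (A \<star> G) n + (B \<star> G) n)"
  by (simp add: fun_eq_iff conv_eq_sum_supp sum.distrib ring_distribs)

lemma conv_add_right:
  assumes "fin_supp A" "fin_supp B"
  shows "F \<star> (\<lambda>i. A i + B i) = (\<lambda>n. (F \<star> A) n + (F \<star> B) n)"
proof
  fix n
  let ?S = "{j. A j \<noteq> 0} \<union> {j. B j \<noteq> 0}"
  have "finite ?S" using assms unfolding fin_supp_def by simp
  from conv_eq_sum[OF this, of A F n] conv_eq_sum[OF this, of B F n]
    conv_eq_sum[OF this, of "\<lambda>i. A i + B i" F n]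
  show "(F \<star> (\<lambda>i. A i + B i)) n = (F \<star> A) n + (F \<star> B) n"
    by (simp add: sum.distrib ring_distribs)
qed

lemma W_plus_conv: "fin_supp g \<Longrightarrow> W_plus (H \<star> g) = W_plus H \<star> g"
  by (simp add: fun_eq_iff W_plus_def conv_eq_sum_supp sum_subtractf[symmetric]
      left_diff_distrib algebra_simps)

lemma W_plus_power_conv: "fin_supp g \<Longrightarrow> (W_plus ^^ m) (H \<star> g) = (W_plus ^^ m) H \<star> g"
  by (induction m) (simp_all add: W_plus_conv)

lemma W_plus_neg_shift: "W_plus_neg \<beta> (\<lambda>i. F (i - j)) n = W_plus_neg \<beta> F (n - j)"
proof -
  have "bij_betw (\<lambda>k. k + j) {n - j..} {n..}"
    by (rule bij_betw_byWitness[where f'="\<lambda>k. k - j"]) auto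
  from infsum_reindex_bij_betw[OF this,
      of "\<lambda>i. complex_of_real (kk \<beta> (nat (i - n))) * F (i - j)"]
  show ?thesis
    unfolding W_plus_neg_def by (simp add: algebra_simps)
qed

lemma W_plus_neg_conv:
  assumes F: "fin_supp F" and g: "fin_supp g"
  shows "W_plus_neg \<beta> (F \<star> g) = W_plus_neg \<beta> F \<star> g"
proof
  fix n
  let ?S = "{j. g j \<noteq> 0}" and ?c = "\<lambda>i. complex_of_real (kk \<beta> (nat (i - n)))"
  have summable: "(\<lambda>i. ?c i * F (i - j) * g j) summable_on {n..}" for j
    using fin_supp_mult_left[OF fin_supp_shift[OF F], of "\<lambda>i. ?c i * g j" j]
    by (intro fin_supp_summable_on) (simp add: ac_simps)
  have "W_plus_neg \<beta> (F \<star> g) n = infsum (\<lambda>i. \<Sum>j\<in>?S. ?c i * F (i - j) * g j) {n..}"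
    unfolding W_plus_neg_def conv_eq_sum_supp[OF g] by (simp add: sum_distrib_left mult.assoc)
  also have "\<dots> = (\<Sum>j\<in>?S. infsum (\<lambda>i. ?c i * F (i - j) * g j) {n..})"
    using g summable unfolding fin_supp_def by (intro infsum_sum) auto
  also have "\<dots> = (\<Sum>j\<in>?S. W_plus_neg \<beta> (\<lambda>i. F (i - j)) n * g j)"
    unfolding W_plus_neg_def by (simp add: infsum_cmult_left')
  also have "\<dots> = (W_plus_neg \<beta> F \<star> g) n"
    by (simp add: W_plus_neg_shift conv_eq_sum_supp[OF g])
  finally show "W_plus_neg \<beta> (F \<star> g) n = (W_plus_neg \<beta> F \<star> g) n" .
qed

lemma W_plus_frac_conv:
  "fin_supp F \<Longrightarrow> fin_supp g \<Longrightarrow> W_plus_frac \<alpha> (F \<star> g) = W_plus_frac \<alpha> F \<star> g"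
  unfolding W_plus_frac_def by (simp only: W_plus_neg_conv W_plus_power_conv)

lemma W_plus_power_add:
  "(W_plus ^^ m) (\<lambda>i. A i + B i) = (\<lambda>n. (W_plus ^^ m) A n + (W_plus ^^ m) B n)"
  by (induction m) (simp_all add: W_plus_def fun_eq_iff)

lemma W_plus_neg_add:
  assumes "fin_supp A" "fin_supp B"
  shows "W_plus_neg \<beta> (\<lambda>i. A i + B i) = (\<lambda>n. W_plus_neg \<beta> A n + W_plus_neg \<beta> B n)"
proof
  fix n
  let ?c = "\<lambda>i. complex_of_real (kk \<beta> (nat (i - n)))"
  have "(\<lambda>i. ?c i * A i) summable_on {n..}" "(\<lambda>i. ?c i * B i) summable_on {n..}"
    using assms by (simp_all add: fin_supp_summable_on fin_supp_mult_left)
  from infsum_add[OF this]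
  show "W_plus_neg \<beta> (\<lambda>i. A i + B i) n = W_plus_neg \<beta> A n + W_plus_neg \<beta> B n"
    unfolding W_plus_neg_def by (simp add: ring_distribs)
qed

lemma W_plus_frac_add:
  "fin_supp A \<Longrightarrow> fin_supp B \<Longrightarrow>
    W_plus_frac \<alpha> (\<lambda>i. A i + B i) n = W_plus_frac \<alpha> A n + W_plus_frac \<alpha> B n"
  unfolding W_plus_frac_def by (simp only: W_plus_neg_add W_plus_power_add)

lemma W_plus_power_eq_0:
  "(\<And>k. k \<ge> a \<Longrightarrow> G k = 0) \<Longrightarrow> n \<ge> a \<Longrightarrow> (W_plus ^^ m) G n = 0"
  by (induction m arbitrary: n) (simp_all add: W_plus_def)

lemma W_plus_frac_eq_0:
  assumes "\<And>k. k \<ge> a \<Longrightarrow> H k = 0" "n \<ge> a"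
  shows "W_plus_frac \<alpha> H n = 0"
proof -
  have "W_plus_neg \<beta> H k = 0" if "k \<ge> a" for \<beta> k
    unfolding W_plus_neg_def using assms(1) that by (intro infsum_0) simp
  with assms(2) show ?thesis
    unfolding W_plus_frac_def by (blast intro: W_plus_power_eq_0)
qed

definition reflect :: "(int \<Rightarrow> 'a) \<Rightarrow> int \<Rightarrow> 'a" where
  "reflect f n = f (- n)"

lemma reflect_reflect [simp]: "reflect (reflect f) = f"
  by (simp add: reflect_def fun_eq_iff)

lemma reflect_add: "reflect (\<lambda>i. A i + B i) = (\<lambda>n. reflect A n + reflect B n)"
  by (simp add: reflect_def fun_eq_iff)

lemma fin_supp_reflect:
  assumes "fin_supp f"
  shows "fin_supp (reflect f)"
proof -
  have "{n. reflect f n \<noteq> 0} = uminus ` {n. f n \<noteq> 0}"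
    by (auto simp: reflect_def intro: image_eqI[of _ _ "- _"])
  with assms show ?thesis
    unfolding fin_supp_def by simp
qed

lemma reflect_conv: "reflect (F \<star> G) = reflect F \<star> reflect G"
proof
  fix n
  have "bij_betw uminus UNIV (UNIV :: int set)"
    by (rule bij_betw_byWitness[where f'=uminus]) auto
  from infsum_reindex_bij_betw[OF this, of "\<lambda>j. F (- n - j) * G j"]
  show "reflect (F \<star> G) n = (reflect F \<star> reflect G) n"
    unfolding conv_def reflect_def by simp
qed

lemma W_minus_eq_reflect: "W_minus f = reflect (W_plus (reflect f))"
  by (simp add: W_minus_def W_plus_def reflect_def fun_eq_iff)

lemma W_minus_power_eq_reflect: "(W_minus ^^ m) f = reflect ((W_plus ^^ m) (reflect f))"
  by (induction m) (simp_all add: W_minus_eq_reflect)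

lemma W_minus_neg_eq_reflect: "W_minus_neg \<beta> f = reflect (W_plus_neg \<beta> (reflect f))"
proof
  fix n :: int
  have "bij_betw uminus {..n} {- n..}"
    by (rule bij_betw_byWitness[where f'=uminus]) auto
  from infsum_reindex_bij_betw[OF this,
      of "\<lambda>j. complex_of_real (kk \<beta> (nat (j + n))) * f (- j)"]
  show "W_minus_neg \<beta> f n = reflect (W_plus_neg \<beta> (reflect f)) n"
    unfolding W_minus_neg_def W_plus_neg_def reflect_def by simp
qed

lemma W_minus_frac_eq_reflect: "W_minus_frac \<alpha> f = reflect (W_plus_frac \<alpha> (reflect f))"
  unfolding W_minus_frac_def W_plus_frac_def
  by (simp only: W_minus_neg_eq_reflect W_minus_power_eq_reflect reflect_reflect)

lemma W_minus_frac_conv: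
  assumes "fin_supp F" "fin_supp g"
  shows "W_minus_frac \<alpha> (F \<star> g) = W_minus_frac \<alpha> F \<star> g"
proof -
  have "W_plus_frac \<alpha> (reflect F \<star> reflect g) = W_plus_frac \<alpha> (reflect F) \<star> reflect g"
    using assms by (simp add: W_plus_frac_conv fin_supp_reflect)
  then show ?thesis
    by (simp add: W_minus_frac_eq_reflect reflect_conv)
qed

lemma W_minus_frac_add:
  assumes "fin_supp A" "fin_supp B"
  shows "W_minus_frac \<alpha> (\<lambda>i. A i + B i) n = W_minus_frac \<alpha> A n + W_minus_frac \<alpha> B n"
proof -
  have "W_plus_frac \<alpha> (\<lambda>i. reflect A i + reflect B i) (- n)
      = W_plus_frac \<alpha> (reflect A) (- n) + W_plus_frac \<alpha> (reflect B) (- n)"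
    using assms by (simp add: W_plus_frac_add fin_supp_reflect)
  then show ?thesis
    unfolding W_minus_frac_eq_reflect reflect_add by (simp only: reflect_def)
qed

lemma W_minus_frac_eq_0:
  assumes "\<And>k. k \<le> a \<Longrightarrow> H k = 0" "n \<le> a"
  shows "W_minus_frac \<alpha> H n = 0"
proof -
  have "W_plus_frac \<alpha> (reflect H) (- n) = 0"
    using assms by (intro W_plus_frac_eq_0[of "- a"]) (auto simp: reflect_def)
  then show ?thesis
    by (simp add: W_minus_frac_eq_reflect reflect_def)
qed

lemma conv_split_parts:
  assumes "fin_supp f" "fin_supp g"
  shows "f \<star> g = (\<lambda>n. (pos_part f \<star> pos_part g) n + (pos_part f \<star> neg_part g) n
                     + (neg_part f \<star> pos_part g) n + (neg_part f \<star> neg_part g) n)"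
proof -
  have parts: "fin_supp (pos_part g)" "fin_supp (neg_part g)"
    using assms(2) by (simp_all add: fin_supp_pos_part fin_supp_neg_part)
  have "f \<star> g = (\<lambda>i. pos_part f i + neg_part f i) \<star> (\<lambda>i. pos_part g i + neg_part g i)"
    by (simp only: pos_part_add_neg_part)
  also have "\<dots> = (\<lambda>n. (pos_part f \<star> pos_part g) n + (pos_part f \<star> neg_part g) n
                     + ((neg_part f \<star> pos_part g) n + (neg_part f \<star> neg_part g) n))"
    using parts by (simp add: conv_add_left conv_add_right fin_supp_add)
  finally show ?thesis by (simp add: add.assoc)
qed

lemma conv_neg_part_neg_part: "n \<ge> -1 \<Longrightarrow> (neg_part f \<star> neg_part g) n = 0"
  unfolding conv_def by (intro infsum_0) (simp add: neg_part_def)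

lemma conv_pos_part_pos_part: "n < 0 \<Longrightarrow> (pos_part f \<star> pos_part g) n = 0"
  unfolding conv_def by (intro infsum_0) (simp add: pos_part_def)

lemma W_plus_frac_conv_split:
  assumes f: "fin_supp f" and g: "fin_supp g" and "n \<ge> 0"
  shows "W_plus_frac \<alpha> (f \<star> g) n =
           (W_plus_frac \<alpha> (pos_part f) \<star> neg_part g) n
         + W_plus_frac \<alpha> (pos_part f \<star> pos_part g) n
         + (neg_part f \<star> W_plus_frac \<alpha> (pos_part g)) n"
proof -
  note parts = fin_supp_pos_part[OF f] fin_supp_neg_part[OF f]
    fin_supp_pos_part[OF g] fin_supp_neg_part[OF g]
  have "W_plus_frac \<alpha> (f \<star> g) n =
          W_plus_frac \<alpha> (pos_part f \<star> pos_part g) n + W_plus_frac \<alpha> (pos_part f \<star> neg_part g) n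
        + W_plus_frac \<alpha> (neg_part f \<star> pos_part g) n + W_plus_frac \<alpha> (neg_part f \<star> neg_part g) n"
    unfolding conv_split_parts[OF f g]
    by (simp add: parts W_plus_frac_add fin_supp_add fin_supp_conv)
  also have "W_plus_frac \<alpha> (neg_part f \<star> neg_part g) n = 0"
    using \<open>n \<ge> 0\<close> by (intro W_plus_frac_eq_0[of "-1"]) (simp_all add: conv_neg_part_neg_part)
  also have "W_plus_frac \<alpha> (pos_part f \<star> neg_part g) = W_plus_frac \<alpha> (pos_part f) \<star> neg_part g"
    using parts by (simp add: W_plus_frac_conv)
  also have "W_plus_frac \<alpha> (neg_part f \<star> pos_part g) = neg_part f \<star> W_plus_frac \<alpha> (pos_part g)"
    using W_plus_frac_conv[OF parts(3,2)] by (simp only: conv_commute)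
  finally show ?thesis by simp
qed

lemma W_minus_frac_conv_split:
  assumes f: "fin_supp f" and g: "fin_supp g" and "n < 0"
  shows "W_minus_frac \<alpha> (f \<star> g) n =
           (W_minus_frac \<alpha> (neg_part f) \<star> pos_part g) n
         + W_minus_frac \<alpha> (neg_part f \<star> neg_part g) n
         + (pos_part f \<star> W_minus_frac \<alpha> (neg_part g)) n"
proof -
  note parts = fin_supp_pos_part[OF f] fin_supp_neg_part[OF f]
    fin_supp_pos_part[OF g] fin_supp_neg_part[OF g]
  have "W_minus_frac \<alpha> (f \<star> g) n =
          W_minus_frac \<alpha> (pos_part f \<star> pos_part g) n + W_minus_frac \<alpha> (pos_part f \<star> neg_part g) n
        + W_minus_frac \<alpha> (neg_part f \<star> pos_part g) n + W_minus_frac \<alpha> (neg_part f \<star> neg_part g) n"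
    unfolding conv_split_parts[OF f g]
    by (simp add: parts W_minus_frac_add fin_supp_add fin_supp_conv)
  also have "W_minus_frac \<alpha> (pos_part f \<star> pos_part g) n = 0"
    using \<open>n < 0\<close> by (intro W_minus_frac_eq_0[of "-1"]) (simp_all add: conv_pos_part_pos_part)
  also have "W_minus_frac \<alpha> (neg_part f \<star> pos_part g) = W_minus_frac \<alpha> (neg_part f) \<star> pos_part g"
    using parts by (simp add: W_minus_frac_conv)
  also have "W_minus_frac \<alpha> (pos_part f \<star> neg_part g) = pos_part f \<star> W_minus_frac \<alpha> (neg_part g)"
    using W_minus_frac_conv[OF parts(4,1)] by (simp only: conv_commute)
  finally show ?thesis by (simp add: ac_simps)
qed

theorem lemma2p10:
  fixes f g :: "int \<Rightarrow> complex" and \<alpha> :: real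
  assumes "fin_supp f" and "fin_supp g" and "\<alpha> > 0"
  shows "(\<forall>n\<ge>0. W_frac \<alpha> (f \<star> g) n =
            (W_plus_frac \<alpha> (pos_part f) \<star> neg_part g) n
          + W_plus_frac \<alpha> (pos_part f \<star> pos_part g) n
          + (neg_part f \<star> W_plus_frac \<alpha> (pos_part g)) n)
      \<and> (\<forall>n<0. W_frac \<alpha> (f \<star> g) n =
            (W_minus_frac \<alpha> (neg_part f) \<star> pos_part g) n
          + W_minus_frac \<alpha> (neg_part f \<star> neg_part g) n
          + (pos_part f \<star> W_minus_frac \<alpha> (neg_part g)) n)"
  using W_plus_frac_conv_split[OF assms(1,2)] W_minus_frac_conv_split[OF assms(1,2)]
  by (simp add: W_frac_def)

end
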